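(* For every constant $K>1$ there is a $K$-Lipschitz homeomorphism of a filled ideal hyperbolic triangle to itself which maps each side to itself and multiplies arc length along each side by exactly $K$. *)

theory Defs
  imports "HOL-Analysis.Analysis"
begin

definition upper_half_plane :: "complex set" where
  "upper_half_plane = {z. Im z > 0}"

definition hdist :: "complex \<Rightarrow> complex \<Rightarrow> real" where
  "hdist z w = arcosh (1 + (cmod (z - w))^2 / (2 * Im z * Im w))"

text \<open>The filled ideal triangle with ideal vertices -1, 1 and infinity.\<close>
definition ideal_triangle :: "complex set" where
  "ideal_triangle = {z. Im z > 0 \<and> \<bar>Re z\<bar> \<le> 1 \<and> cmod z \<ge> 1}"

definition side_left :: "complex set" where
  "side_left = {z. Im z > 0 \<and> Re z = -1}"

definition side_right :: "complex set" where
  "side_right = {z. Im z > 0 \<and> Re z = 1}"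

definition side_bottom :: "complex set" where
  "side_bottom = {z. Im z > 0 \<and> cmod z = 1}"

definition triangle_sides :: "complex set set" where
  "triangle_sides = {side_left, side_right, side_bottom}"

end

theory Submission
  imports Defs
begin

text \<open>The filled ideal triangle is the union of three pairwise tangent horoball neighbourhoods of
  its cusps and a thick part. In the cusp at \<open>\<infinity>\<close> we stretch vertically, \<open>y \<mapsto> 2 * (y / 2) powr K\<close>:
  this fixes the horocycle \<open>Im z = 2\<close>, multiplies the depth \<open>ln (y / 2)\<close> by \<open>K\<close> and is
  \<open>K\<close>-Lipschitz on the horoball. The order-three rotation of the triangle transports this map to the
  other two cusps, and on the thick part we take the identity. Two points in the same cusp are
  handled by the cusp estimate; otherwise each point moves by at most \<open>K - 1\<close> times its depth,
  and the depths of two points in different horoballs add up to at most their distance.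
  On the side from \<open>1\<close> to \<open>\<infinity>\<close> the map is the vertical stretch, which multiplies length along
  vertical lines exactly by \<open>K\<close>; the other sides are rotations of this one, and the map commutes
  with the rotation.\<close>

section \<open>Hyperbolic distance in the upper half-plane\<close>

definition hdist_cosh :: "complex \<Rightarrow> complex \<Rightarrow> real" where
  "hdist_cosh z w = 1 + (cmod (z - w))\<^sup>2 / (2 * Im z * Im w)"

lemma hdist_eq_arcosh: "hdist z w = arcosh (hdist_cosh z w)"
  by (simp add: hdist_def hdist_cosh_def)

lemma hdist_cosh_coords:
  "hdist_cosh z w = 1 + ((Re z - Re w)\<^sup>2 + (Im z - Im w)\<^sup>2) / (2 * Im z * Im w)"
  by (simp add: hdist_cosh_def cmod_power2)

lemma hdist_cosh_ge_1: "Im z > 0 \<Longrightarrow> Im w > 0 \<Longrightarrow> hdist_cosh z w \<ge> 1"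
  by (simp add: hdist_cosh_def)

lemma cosh_hdist: "Im z > 0 \<Longrightarrow> Im w > 0 \<Longrightarrow> cosh (hdist z w) = hdist_cosh z w"
  by (simp add: hdist_eq_arcosh hdist_cosh_ge_1)

lemma hdist_commute: "hdist z w = hdist w z"
  by (simp add: hdist_def norm_minus_commute mult_ac)

lemma hdist_nonneg: "Im z > 0 \<Longrightarrow> Im w > 0 \<Longrightarrow> hdist z w \<ge> 0"
  by (simp add: hdist_eq_arcosh hdist_cosh_ge_1)

lemma hdist_le_iff:
  assumes "Im z > 0" "Im w > 0" "t \<ge> 0"
  shows "hdist z w \<le> t \<longleftrightarrow> hdist_cosh z w \<le> cosh t"
  using assms cosh_real_nonneg_le_iff[of "hdist z w" t] by (simp add: hdist_nonneg cosh_hdist)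

lemma le_hdist_if_cosh_le:
  assumes "Im z > 0" "Im w > 0" "cosh t \<le> hdist_cosh z w"
  shows "t \<le> hdist z w"
proof (cases "t \<ge> 0")
  case True
  then show ?thesis
    using assms cosh_real_nonneg_le_iff[of t "hdist z w"] by (simp add: hdist_nonneg cosh_hdist)
qed (use hdist_nonneg[OF assms(1,2)] in linarith)

lemma cosh_ln_div:
  fixes y v :: real
  assumes "y > 0" "v > 0"
  shows "cosh (ln (y / v)) = 1 + (y - v)\<^sup>2 / (2 * y * v)"
  using assms by (simp add: cosh_ln_real field_simps power2_eq_square)

lemma hdist_vertical:
  assumes "Re z = Re w" "Im z > 0" "Im w > 0"
  shows "hdist z w = \<bar>ln (Im z / Im w)\<bar>"
proof -
  have "hdist_cosh z w = cosh \<bar>ln (Im z / Im w)\<bar>"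
    using assms by (simp add: hdist_cosh_coords cosh_ln_div)
  then show ?thesis
    unfolding hdist_eq_arcosh by (simp only: arcosh_cosh_real abs_ge_zero)
qed

lemma ln_Im_div_le_hdist:
  assumes "Im z > 0" "Im w > 0"
  shows "ln (Im z / Im w) \<le> hdist z w"
proof (rule le_hdist_if_cosh_le[OF assms])
  show "cosh (ln (Im z / Im w)) \<le> hdist_cosh z w"
    using assms by (simp add: cosh_ln_div hdist_cosh_coords divide_right_mono)
qed

text \<open>A special case of the triangle inequality. If \<open>cosh (hdist z w) = A + B\<close> with
  \<open>B = Im z / (2 * Im w)\<close>, raising \<open>z\<close> by the factor \<open>e = exp s\<close> gives the value
  \<open>A / e + B * e = cosh d * cosh s + (B - A) * sinh s\<close>, and \<open>4 * A * B \<ge> 1\<close> yields \<open>B - A \<le> sinh d\<close>.\<close>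

lemma hdist_raise_le:
  assumes z: "Im z > 0" and w: "Im w > 0" and y: "Im z \<le> y"
  shows "hdist (Complex (Re z) y) w \<le> hdist z w + ln (y / Im z)"
proof -
  define u where "u = Complex (Re z) y"
  define A where "A = ((Re z - Re w)\<^sup>2 + (Im w)\<^sup>2) / (2 * Im z * Im w)"
  define B where "B = Im z / (2 * Im w)"
  define e where "e = y / Im z"
  define d where "d = hdist z w"
  define s where "s = ln e"
  have u: "Im u > 0" using z y by (simp add: u_def)
  have e: "e \<ge> 1" using z y by (simp add: e_def)
  have AB: "hdist_cosh z w = A + B"
    using z w by (simp add: hdist_cosh_coords A_def B_def field_simps power2_eq_square)
  have AB_raised: "hdist_cosh u w = A / e + B * e"
    using z w y by (simp add: hdist_cosh_coords u_def A_def B_def e_def field_simps power2_eq_square)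
  have "4 * A * B = ((Re z - Re w)\<^sup>2 + (Im w)\<^sup>2) / (Im w)\<^sup>2"
    using z w by (simp add: A_def B_def field_simps power2_eq_square)
  then have "4 * A * B \<ge> 1"
    using w by simp
  moreover have "(A + B)\<^sup>2 - (B - A)\<^sup>2 = 4 * A * B"
    by (simp add: power2_eq_square algebra_simps)
  ultimately have "(B - A)\<^sup>2 \<le> (A + B)\<^sup>2 - 1"
    by linarith
  moreover have "sinh d = sqrt ((A + B)\<^sup>2 - 1)"
    using z w hdist_cosh_ge_1[OF z w] by (simp add: d_def hdist_eq_arcosh AB sinh_arcosh_real)
  ultimately have "B - A \<le> sinh d"
    by (simp add: real_le_rsqrt)
  have "A / e + B * e = cosh d * cosh s + (B - A) * sinh s"
    using e z w by (simp add: s_def d_def cosh_hdist AB cosh_ln_real sinh_ln_real field_simps)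
  also have "\<dots> \<le> cosh d * cosh s + sinh d * sinh s"
    using \<open>B - A \<le> sinh d\<close> e by (intro add_left_mono mult_right_mono) (auto simp: s_def)
  also have "\<dots> = cosh (d + s)"
    by (simp add: cosh_add)
  finally have "hdist_cosh u w \<le> cosh (d + s)"
    using AB_raised by simp
  moreover have "d + s \<ge> 0"
    using z w e by (simp add: d_def s_def hdist_nonneg)
  ultimately show ?thesis
    using u w by (simp add: hdist_le_iff u_def d_def s_def e_def)
qed

text \<open>The left-hand side is the sum of the depths of \<open>z\<close> in the horoball \<open>Im z \<ge> 1\<close> at \<open>\<infinity>\<close> and of
  \<open>w\<close> in the horoball \<open>cmod (w - x)\<^sup>2 \<le> Im w\<close> at \<open>x\<close>.\<close>

lemma ln_horoball_depths_le_hdist: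
  assumes z: "Im z > 0" and w: "Im w > 0" and near: "cmod (w - of_real x) \<le> Im z"
  shows "ln (Im z * Im w / (cmod (w - of_real x))\<^sup>2) \<le> hdist z w"
proof (rule le_hdist_if_cosh_le[OF z w])
  define q where "q = (cmod (w - of_real x))\<^sup>2"
  define b where "b = Re w - x"
  define c where "c = Re z - Re w"
  have q: "q = b\<^sup>2 + (Im w)\<^sup>2"
    by (simp add: q_def b_def cmod_power2)
  have "q > 0"
    using w by (simp add: q add_nonneg_pos)
  have "q \<le> (Im z)\<^sup>2"
    using near by (simp add: q_def power_mono)
  then have "q * b\<^sup>2 \<le> (Im z)\<^sup>2 * b\<^sup>2"
    by (simp add: mult_right_mono)
  moreover have "q * c\<^sup>2 \<ge> 0"
    using \<open>q > 0\<close> by simp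
  moreover have "q\<^sup>2 = q * b\<^sup>2 + q * (Im w)\<^sup>2" "q * (Im z)\<^sup>2 = (Im z)\<^sup>2 * b\<^sup>2 + (Im z * Im w)\<^sup>2"
    by (simp_all add: q power2_eq_square algebra_simps)
  ultimately have key: "(Im z * Im w)\<^sup>2 + q\<^sup>2 \<le> q * (c\<^sup>2 + (Im z)\<^sup>2 + (Im w)\<^sup>2)"
    by (simp add: algebra_simps)
  have "cosh (ln (Im z * Im w / q)) = ((Im z * Im w)\<^sup>2 + q\<^sup>2) / (2 * Im z * Im w * q)"
    using z w \<open>q > 0\<close> by (simp add: cosh_ln_real field_simps power2_eq_square)
  also have "\<dots> \<le> q * (c\<^sup>2 + (Im z)\<^sup>2 + (Im w)\<^sup>2) / (2 * Im z * Im w * q)"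
    using z w \<open>q > 0\<close> key by (intro divide_right_mono) auto
  also have "\<dots> = hdist_cosh z w"
    using z w \<open>q > 0\<close> by (simp add: hdist_cosh_coords c_def field_simps power2_eq_square)
  finally show "cosh (ln (Im z * Im w / (cmod (w - of_real x))\<^sup>2)) \<le> hdist_cosh z w"
    by (simp add: q_def)
qed

lemma Im_moebius_real:
  fixes a b c d :: real
  shows "Im (moebius (of_real a) (of_real b) (of_real c) (of_real d) z)
           = (a * d - b * c) * Im z / (cmod (of_real c * z + of_real d))\<^sup>2"
  unfolding cmod_power2 by (simp add: moebius_def Im_divide algebra_simps power2_eq_square)

lemma moebius_diff:
  fixes a b c d z w :: "'a :: field"
  assumes "c * z + d \<noteq> 0" "c * w + d \<noteq> 0"
  shows "moebius a b c d z - moebius a b c d w = (a * d - b * c) * (z - w) / ((c * z + d) * (c * w + d))"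
  using assms by (simp add: moebius_def field_simps)

lemma hdist_moebius_real:
  fixes a b c d :: real
  assumes det: "a * d - b * c > 0" and z: "Im z > 0" and w: "Im w > 0"
  defines "M \<equiv> moebius (of_real a) (of_real b) (of_real c) (of_real d)"
  shows "hdist (M z) (M w) = hdist z w"
proof -
  have nonzero: "of_real c * u + of_real d \<noteq> 0" if "Im u > 0" for u
  proof (cases "c = 0")
    case True
    then show ?thesis using det by auto
  next
    case False
    then show ?thesis using that by (auto simp: complex_eq_iff)
  qed
  define D where "D = a * d - b * c"
  define P where "P = cmod (of_real c * z + of_real d)"
  define Q where "Q = cmod (of_real c * w + of_real d)"
  have "P > 0" "Q > 0"
    using nonzero[OF z] nonzero[OF w] by (auto simp: P_def Q_def)
  have "(cmod (M z - M w))\<^sup>2 = D\<^sup>2 * (cmod (z - w))\<^sup>2 / (P\<^sup>2 * Q\<^sup>2)"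
    unfolding M_def moebius_diff[OF nonzero[OF z] nonzero[OF w]] D_def P_def Q_def
    by (simp add: norm_divide norm_mult power_divide power_mult_distrib flip: of_real_mult of_real_diff)
  then have "hdist_cosh (M z) (M w)
               = 1 + D\<^sup>2 * (cmod (z - w))\<^sup>2 / (P\<^sup>2 * Q\<^sup>2) / (2 * (D * Im z / P\<^sup>2) * (D * Im w / Q\<^sup>2))"
    by (simp add: hdist_cosh_def M_def Im_moebius_real D_def P_def Q_def)
  also have "\<dots> = hdist_cosh z w"
    using det \<open>P > 0\<close> \<open>Q > 0\<close> z w
    by (simp add: hdist_cosh_def flip: D_def) (simp add: field_simps power2_eq_square)
  finally show ?thesis
    by (simp add: hdist_eq_arcosh)
qed

section \<open>The rotation of the ideal triangle\<close>

definition rot :: "complex \<Rightarrow> complex" where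
  "rot = moebius (-1) (-3) 1 (-1)"

lemma rot_eq: "rot z = (- z - 3) / (z - 1)"
  by (simp add: rot_def moebius_def)

lemma Im_rot: "Im (rot z) = 4 * Im z / (cmod (z - 1))\<^sup>2"
  using Im_moebius_real[where a="-1" and b="-3" and c=1 and d="-1"] by (simp add: rot_def)

lemma Re_rot: "Re (rot z) = (3 - 2 * Re z - (Re z)\<^sup>2 - (Im z)\<^sup>2) / (cmod (z - 1))\<^sup>2"
proof -
  have "Re (- z - 3) * Re (z - 1) + Im (- z - 3) * Im (z - 1) = 3 - 2 * Re z - (Re z)\<^sup>2 - (Im z)\<^sup>2"
    by (simp add: algebra_simps power2_eq_square)
  then show ?thesis
    unfolding rot_eq Re_divide cmod_power2[of "z - 1"] by (rule arg_cong)
qed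

lemma norm_rot: "cmod (rot z) = cmod (z + 3) / cmod (z - 1)"
proof -
  have "cmod (- z - 3) = cmod (z + 3)"
    using norm_minus_cancel[of "z + 3"] by (simp add: algebra_simps)
  then show ?thesis
    by (simp add: rot_eq norm_divide)
qed

lemma Im_rot_pos:
  assumes "Im z > 0"
  shows "Im (rot z) > 0"
proof -
  have "z - 1 \<noteq> 0"
    using assms by auto
  then show ?thesis
    using assms by (simp add: Im_rot)
qed

lemma hdist_rot:
  assumes "Im z > 0" "Im w > 0"
  shows "hdist (rot z) (rot w) = hdist z w"
proof -
  have "hdist (moebius (of_real (-1)) (of_real (-3)) (of_real 1) (of_real (-1)) z)
          (moebius (of_real (-1)) (of_real (-3)) (of_real 1) (of_real (-1)) w) = hdist z w"
    by (rule hdist_moebius_real) (use assms in auto)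
  then show ?thesis
    by (simp add: rot_def)
qed

lemma rot_rot_rot:
  assumes "Im z > 0"
  shows "rot (rot (rot z)) = z"
proof -
  have nz: "z - 1 \<noteq> 0" "z + 1 \<noteq> 0"
    using assms by (auto simp: complex_eq_iff)
  have "- ((- z - 3) / (z - 1)) - 3 = (- 2) * (z - 3) / (z - 1)"
       "(- z - 3) / (z - 1) - 1 = (- 2) * (z + 1) / (z - 1)"
    using nz by (simp_all add: field_simps)
  then have "rot (rot z) = (- 2) * (z - 3) / ((- 2) * (z + 1))"
    using nz by (simp add: rot_eq)
  also have "\<dots> = (z - 3) / (z + 1)"
    by (rule mult_divide_mult_cancel_left) simp
  finally have "rot (rot (rot z)) = rot ((z - 3) / (z + 1))"
    by simp
  also have "- ((z - 3) / (z + 1)) - 3 = (- 4) * z / (z + 1)" "(z - 3) / (z + 1) - 1 = (- 4) / (z + 1)"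
    using nz by (simp_all add: field_simps)
  then have "rot ((z - 3) / (z + 1)) = z"
    using nz by (simp add: rot_eq)
  finally show ?thesis .
qed

lemma continuous_on_rot: "continuous_on upper_half_plane rot"
proof -
  have "continuous_on upper_half_plane (\<lambda>z. (- z - 3) / (z - 1))"
    unfolding upper_half_plane_def by (auto intro!: continuous_intros)
  then show ?thesis
    by (rule continuous_on_eq) (simp add: rot_eq)
qed

lemma Im_funpow_rot_pos: "Im z > 0 \<Longrightarrow> Im ((rot ^^ n) z) > 0"
  by (induction n) (simp_all add: Im_rot_pos)

lemma hdist_funpow_rot:
  "Im z > 0 \<Longrightarrow> Im w > 0 \<Longrightarrow> hdist ((rot ^^ n) z) ((rot ^^ n) w) = hdist z w"
proof (induction n)
  case (Suc n)
  then show ?case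
    using hdist_rot[OF Im_funpow_rot_pos Im_funpow_rot_pos] by simp
qed simp

lemma funpow_rot_3: "Im z > 0 \<Longrightarrow> (rot ^^ 3) z = z"
  by (simp add: numeral_3_eq_3 rot_rot_rot)

lemma funpow_rot_inverse:
  assumes "i \<le> 3" "Im z > 0"
  shows "(rot ^^ (3 - i)) ((rot ^^ i) z) = z" "(rot ^^ i) ((rot ^^ (3 - i)) z) = z"
  using assms funpow_rot_3[of z] by (simp_all flip: funpow_add[unfolded comp_def, THEN fun_cong])

lemma funpow_rot_adjacent:
  assumes "i < 3" "j < 3" "i \<noteq> j"
  shows "(\<forall>x. Im x > 0 \<longrightarrow> (rot ^^ j) x = rot ((rot ^^ i) x))
       \<or> (\<forall>x. Im x > 0 \<longrightarrow> (rot ^^ i) x = rot ((rot ^^ j) x))"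
proof -
  have "i \<in> {0, 1, 2}" "j \<in> {0, 1, 2}"
    using assms by auto
  then show ?thesis
    using assms(3) by (auto simp: numeral_2_eq_2 rot_rot_rot)
qed

lemma continuous_on_funpow_rot: "continuous_on upper_half_plane (rot ^^ n)"
proof (induction n)
  case (Suc n)
  have "(rot ^^ n) ` upper_half_plane \<subseteq> upper_half_plane"
    by (auto simp: upper_half_plane_def Im_funpow_rot_pos)
  then show ?case
    using continuous_on_compose2[OF continuous_on_rot Suc.IH] by (simp add: comp_def)
qed (simp add: continuous_on_id)

lemma rot_ideal_triangle:
  assumes "z \<in> ideal_triangle"
  shows "rot z \<in> ideal_triangle"
proof -
  define a where "a = Re z"
  define b where "b = Im z"
  have z: "b > 0" "\<bar>a\<bar> \<le> 1" "1 \<le> a\<^sup>2 + b\<^sup>2"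
    using assms by (auto simp: ideal_triangle_def a_def b_def cmod_def)
  have q: "(cmod (z - 1))\<^sup>2 = a\<^sup>2 + b\<^sup>2 - 2 * a + 1"
    unfolding cmod_power2 by (simp add: a_def b_def power2_eq_square algebra_simps)
  have "(cmod (z - 1))\<^sup>2 > 0"
    using z by (auto simp: a_def b_def)
  moreover have "\<bar>3 - 2 * a - a\<^sup>2 - b\<^sup>2\<bar> \<le> (cmod (z - 1))\<^sup>2"
    using z by (simp add: q abs_le_iff)
  ultimately have "\<bar>Re (rot z)\<bar> \<le> 1"
    by (simp add: Re_rot a_def b_def abs_divide)
  moreover have "(a + 3)\<^sup>2 - (a - 1)\<^sup>2 = 8 * (a + 1)"
    by (simp add: power2_eq_square algebra_simps)
  then have "cmod (z - 1) \<le> cmod (z + 3)"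
    using z by (simp add: cmod_def a_def)
  then have "1 \<le> cmod (rot z)"
    using \<open>(cmod (z - 1))\<^sup>2 > 0\<close> by (simp add: norm_rot)
  ultimately show ?thesis
    using Im_rot_pos z(1) by (simp add: ideal_triangle_def b_def)
qed

lemma funpow_rot_ideal_triangle: "z \<in> ideal_triangle \<Longrightarrow> (rot ^^ n) z \<in> ideal_triangle"
  by (induction n) (simp_all add: rot_ideal_triangle)

lemma rot_Complex_1: "t \<noteq> 0 \<Longrightarrow> rot (Complex 1 t) = Complex (- 1) (4 / t)"
  by (simp add: rot_eq complex_eq_iff Re_divide Im_divide power2_eq_square)

lemma rot_side_right: "rot ` side_right \<subseteq> side_left"
proof
  fix w
  assume "w \<in> rot ` side_right"
  then obtain z where z: "Im z > 0" "Re z = 1" "w = rot z"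
    by (auto simp: side_right_def)
  then have "w = Complex (- 1) (4 / Im z)"
    by (metis complex_surj rot_Complex_1 less_irrefl)
  then show "w \<in> side_left"
    using z(1) by (simp add: side_left_def)
qed

lemma rot_side_left: "rot ` side_left \<subseteq> side_bottom"
proof
  fix w
  assume "w \<in> rot ` side_left"
  then obtain z where z: "Im z > 0" "Re z = - 1" "w = rot z"
    by (auto simp: side_left_def)
  then have "cmod (z + 3) = cmod (z - 1)" "z - 1 \<noteq> 0"
    by (auto simp: cmod_def)
  then show "w \<in> side_bottom"
    using z by (simp add: side_bottom_def norm_rot Im_rot_pos)
qed

lemma rot_side_bottom: "rot ` side_bottom \<subseteq> side_right"
proof
  fix w
  assume "w \<in> rot ` side_bottom"
  then obtain z where z: "Im z > 0" "cmod z = 1" "w = rot z"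
    by (auto simp: side_bottom_def)
  then have "(Re z)\<^sup>2 + (Im z)\<^sup>2 = 1"
    by (simp add: cmod_power2[symmetric])
  moreover have "(cmod (z - 1))\<^sup>2 = (Re z - 1)\<^sup>2 + (Im z)\<^sup>2"
    by (simp add: cmod_power2)
  moreover have "(Re z)\<^sup>2 < 1"
    using z(1) \<open>(Re z)\<^sup>2 + (Im z)\<^sup>2 = 1\<close> by (smt (verit) zero_less_power2)
  then have "Re z < 1"
    by (simp add: abs_square_less_1)
  moreover have "z \<noteq> 1"
    using \<open>Re z < 1\<close> by auto
  ultimately have "Re (rot z) = 1"
    by (simp add: Re_rot power2_eq_square field_simps)
  then show "w \<in> side_right"
    using z by (simp add: side_right_def Im_rot_pos)
qed

lemma image_eq_if_cyclic:
  assumes "f ` A \<subseteq> B" "f ` B \<subseteq> C" "f ` C \<subseteq> A" "\<And>x. x \<in> B \<Longrightarrow> f (f (f x)) = x"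
  shows "f ` A = B"
proof
  show "B \<subseteq> f ` A"
  proof
    fix x
    assume "x \<in> B"
    then have "f x \<in> C"
      using assms(2) by blast
    then have "f (f x) \<in> A"
      using assms(3) by blast
    moreover have "f (f (f x)) = x"
      using assms(4) \<open>x \<in> B\<close> .
    ultimately show "x \<in> f ` A"
      by (metis image_eqI)
  qed
qed (use assms in blast)

lemma image_rot_sides: "rot ` side_right = side_left" "rot ` side_left = side_bottom"
  by (rule image_eq_if_cyclic[OF rot_side_right rot_side_left rot_side_bottom]
        image_eq_if_cyclic[OF rot_side_left rot_side_bottom rot_side_right];
      simp add: rot_rot_rot side_left_def side_bottom_def)+

lemma horoballs_tangent:
  assumes "2 \<le> Im z" "2 \<le> Im (rot z)"
  shows "Im z = 2" "Im (rot z) = 2"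
proof -
  define a b where "a = Re z" and "b = Im z"
  have "z - 1 \<noteq> 0"
    using assms by auto
  then have "(cmod (z - 1))\<^sup>2 \<le> 2 * Im z"
    using assms(2) by (simp add: Im_rot le_divide_eq)
  moreover have "(cmod (z - 1))\<^sup>2 = (a - 1)\<^sup>2 + b\<^sup>2" "(b - 1)\<^sup>2 = b\<^sup>2 - 2 * b + 1"
    unfolding cmod_power2 by (simp_all add: a_def b_def power2_eq_square algebra_simps)
  ultimately have "(a - 1)\<^sup>2 + (b - 1)\<^sup>2 \<le> 1"
    by (simp add: b_def)
  moreover have "1 \<le> (b - 1)\<^sup>2"
    using assms(1) by (simp add: b_def one_le_power)
  ultimately have "(a - 1)\<^sup>2 = 0" "(b - 1)\<^sup>2 = 1"
    using zero_le_power2[of "a - 1"] by linarith+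
  then have "z = Complex 1 2"
    using assms(1) by (auto simp: complex_eq_iff a_def b_def power2_eq_1_iff)
  then show "Im z = 2" "Im (rot z) = 2"
    by (simp_all add: Im_rot cmod_def)
qed

lemma horoball_depths_le_hdist:
  assumes z: "2 \<le> Im z" and w: "Im w > 0" and rw: "2 \<le> Im (rot w)"
  shows "ln (Im z / 2) + ln (Im (rot w) / 2) \<le> hdist z w"
proof -
  have "w - 1 \<noteq> 0"
    using w by auto
  then have q: "(cmod (w - 1))\<^sup>2 \<le> 2 * Im w" "(cmod (w - 1))\<^sup>2 > 0"
    using rw by (simp_all add: Im_rot le_divide_eq)
  moreover have "(Im w)\<^sup>2 \<le> (cmod (w - 1))\<^sup>2"
    by (simp add: cmod_power2)
  ultimately have "Im w * Im w \<le> 2 * Im w"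
    by (simp only: power2_eq_square)
  then have "Im w \<le> 2"
    using w by (simp add: mult_le_cancel_right)
  moreover have "2\<^sup>2 \<le> (Im z)\<^sup>2"
    using z by (intro power_mono) auto
  ultimately have "(cmod (w - 1))\<^sup>2 \<le> (Im z)\<^sup>2"
    using q by simp
  then have "cmod (w - of_real 1) \<le> Im z"
    using z by (simp add: power2_le_iff_abs_le)
  then have "ln (Im z * Im w / (cmod (w - of_real 1))\<^sup>2) \<le> hdist z w"
    using z w by (intro ln_horoball_depths_le_hdist) auto
  moreover have "ln (Im z / 2) + ln (Im (rot w) / 2) = ln ((Im z / 2) * (Im (rot w) / 2))"
    using z rw by (intro ln_mult_pos[symmetric]) auto
  moreover have "(Im z / 2) * (Im (rot w) / 2) = Im z * Im w / (cmod (w - of_real 1))\<^sup>2"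
    by (simp add: Im_rot)
  ultimately show ?thesis
    by simp
qed

section \<open>Stretching a cusp\<close>

definition cusp_stretch :: "real \<Rightarrow> real \<Rightarrow> complex \<Rightarrow> complex" where
  "cusp_stretch h K z = Complex (Re z) (h * (Im z / h) powr K)"

lemma Re_cusp_stretch [simp]: "Re (cusp_stretch h K z) = Re z"
  and Im_cusp_stretch: "Im (cusp_stretch h K z) = h * (Im z / h) powr K"
  by (simp_all add: cusp_stretch_def)

lemma Im_cusp_stretch_pos [simp]: "h > 0 \<Longrightarrow> Im z > 0 \<Longrightarrow> Im (cusp_stretch h K z) > 0"
  by (simp add: Im_cusp_stretch)

lemma cusp_stretch_horocycle: "h > 0 \<Longrightarrow> Im z = h \<Longrightarrow> cusp_stretch h K z = z"
  by (simp add: Im_cusp_stretch complex_eq_iff)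

lemma height_le_Im_cusp_stretch:
  assumes "h > 0" "h \<le> Im z" "K \<ge> 0"
  shows "h \<le> Im (cusp_stretch h K z)"
  using assms ge_one_powr_ge_zero[of "Im z / h" K] by (simp add: Im_cusp_stretch)

lemma Im_le_Im_cusp_stretch:
  assumes "h > 0" "h \<le> Im z" "K \<ge> 1"
  shows "Im z \<le> Im (cusp_stretch h K z)"
proof -
  have "(Im z / h) powr 1 \<le> (Im z / h) powr K"
    using assms by (intro powr_mono) auto
  then show ?thesis
    using assms by (simp add: Im_cusp_stretch field_simps)
qed

lemma ln_Im_cusp_stretch:
  assumes "h > 0" "Im z > 0"
  shows "ln (Im (cusp_stretch h K z) / h) = K * ln (Im z / h)"
  using assms by (simp add: Im_cusp_stretch ln_powr)

lemma ln_Im_div_cusp_stretch: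
  assumes "h > 0" "Im z > 0" "Im w > 0"
  shows "ln (Im (cusp_stretch h K z) / Im (cusp_stretch h K w)) = K * ln (Im z / Im w)"
proof -
  have "ln (Im (cusp_stretch h K z) / Im (cusp_stretch h K w))
          = ln (Im (cusp_stretch h K z) / h) - ln (Im (cusp_stretch h K w) / h)"
    using Im_cusp_stretch_pos[OF assms(1,2), of K] Im_cusp_stretch_pos[OF assms(1,3), of K] assms(1)
    by (simp add: ln_divide_pos)
  also have "\<dots> = K * ln (Im z / Im w)"
    unfolding ln_Im_cusp_stretch[OF assms(1,2)] ln_Im_cusp_stretch[OF assms(1,3)]
    using assms by (simp add: ln_div algebra_simps)
  finally show ?thesis .
qed

lemma cusp_stretch_inverse:
  assumes "h > 0" "Im z > 0" "K \<noteq> 0"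
  shows "cusp_stretch h K (cusp_stretch h (1 / K) z) = z"
  using assms by (simp add: Im_cusp_stretch complex_eq_iff powr_powr)

lemma continuous_on_cusp_stretch: "h > 0 \<Longrightarrow> continuous_on upper_half_plane (cusp_stretch h K)"
  unfolding cusp_stretch_def upper_half_plane_def by (intro continuous_intros) auto

lemma cusp_stretch_ideal_triangle:
  assumes "1 \<le> h" "h \<le> Im z" "K \<ge> 0" "z \<in> ideal_triangle"
  shows "cusp_stretch h K z \<in> ideal_triangle"
proof -
  have "1 \<le> Im (cusp_stretch h K z)"
    using assms height_le_Im_cusp_stretch[of h z K] by simp
  moreover have "Im (cusp_stretch h K z) \<le> cmod (cusp_stretch h K z)"
    by (meson abs_Im_le_cmod abs_ge_self order_trans)
  ultimately show ?thesis
    using assms(4) by (simp add: ideal_triangle_def)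
qed

lemma hdist_cusp_stretch_vertical:
  assumes "h > 0" "Re z = Re w" "Im z > 0" "Im w > 0" "K \<ge> 0"
  shows "hdist (cusp_stretch h K z) (cusp_stretch h K w) = K * hdist z w"
proof -
  have "hdist (cusp_stretch h K z) (cusp_stretch h K w)
          = \<bar>ln (Im (cusp_stretch h K z) / Im (cusp_stretch h K w))\<bar>"
    using assms by (intro hdist_vertical) auto
  also have "\<dots> = K * hdist z w"
    using assms by (simp add: ln_Im_div_cusp_stretch abs_mult hdist_vertical)
  finally show ?thesis .
qed

lemma hdist_cusp_stretch_le:
  assumes h: "h > 0" "h \<le> Im z" and w: "Im w > 0" and K: "K \<ge> 1"
  shows "hdist (cusp_stretch h K z) w \<le> hdist z w + (K - 1) * ln (Im z / h)"
proof -
  have z: "Im z > 0"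
    using h by linarith
  have "ln (Im (cusp_stretch h K z) / Im z) = ln (Im (cusp_stretch h K z) / h) - ln (Im z / h)"
    using Im_cusp_stretch_pos[OF h(1) z, of K] h(1) z by (simp add: ln_divide_pos)
  also have "\<dots> = (K - 1) * ln (Im z / h)"
    unfolding ln_Im_cusp_stretch[OF h(1) z] by (simp add: algebra_simps)
  finally show ?thesis
    using hdist_raise_le[OF z w Im_le_Im_cusp_stretch[OF h K]]
    by (simp add: cusp_stretch_def)
qed

lemma cosh_diff_cosh: "cosh x - cosh y = 2 * sinh ((x + y) / 2) * sinh ((x - y) / 2)"
  for x y :: real
proof -
  have "cosh x = cosh ((x + y) / 2 + (x - y) / 2)" "cosh y = cosh ((x + y) / 2 - (x - y) / 2)"
    by (simp_all add: field_simps)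
  then show ?thesis
    by (simp only: cosh_add cosh_diff)
qed

lemma cosh_mult_diff_mono:
  fixes a b K :: real
  assumes "0 \<le> a" "a \<le> b" "K \<ge> 1"
  shows "cosh (K * a) - cosh a \<le> cosh (K * b) - cosh b"
proof -
  define p q where "p = (b + a) / 2" and "q = (b - a) / 2"
  have "p \<ge> 0" "q \<ge> 0"
    using assms by (simp_all add: p_def q_def)
  then have "sinh p \<le> sinh (K * p)" "sinh q \<le> sinh (K * q)" "sinh p \<ge> 0" "sinh q \<ge> 0"
    using assms by (simp_all add: mult_le_cancel_right1 mult_right_mono)
  then have "2 * sinh p * sinh q \<le> 2 * sinh (K * p) * sinh (K * q)"
    by (simp add: mult_mono)
  moreover have "cosh b - cosh a = 2 * sinh p * sinh q"
    "cosh (K * b) - cosh (K * a) = 2 * sinh (K * p) * sinh (K * q)"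
    by (simp_all add: cosh_diff_cosh p_def q_def algebra_simps add_divide_distrib diff_divide_distrib)
  ultimately show ?thesis
    by linarith
qed

text \<open>With \<open>t = ln (Im z / Im w)\<close> we have \<open>cosh (hdist z w) = cosh t + u\<close>, \<open>u\<close> the horizontal term.
  The stretch replaces \<open>t\<close> by \<open>K * t\<close> and shrinks \<open>u\<close>; as \<open>\<bar>t\<bar> \<le> hdist z w\<close> and
  \<open>cosh (K * x) - cosh x\<close> increases for \<open>x \<ge> 0\<close>, the result is at most \<open>cosh (K * hdist z w)\<close>.\<close>

lemma hdist_cusp_stretch_lipschitz:
  assumes h: "h > 0" and z: "h \<le> Im z" and w: "h \<le> Im w" and K: "K \<ge> 1"
  shows "hdist (cusp_stretch h K z) (cusp_stretch h K w) \<le> K * hdist z w"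
proof -
  define z' w' where "z' = cusp_stretch h K z" and "w' = cusp_stretch h K w"
  define t d u where "t = ln (Im z / Im w)" and "d = hdist z w" and "u = (Re z - Re w)\<^sup>2"
  have pos: "Im z > 0" "Im w > 0" "Im z' > 0" "Im w' > 0"
    using h z w by (simp_all add: z'_def w'_def)
  have "cosh d = cosh t + u / (2 * Im z * Im w)"
    using pos by (simp add: d_def t_def u_def cosh_hdist hdist_cosh_coords cosh_ln_div add_divide_distrib)
  moreover have "hdist_cosh z' w' = cosh (K * t) + u / (2 * Im z' * Im w')"
    using pos ln_Im_div_cusp_stretch[OF h pos(1,2), of K, folded z'_def w'_def, symmetric]
    by (simp add: t_def u_def z'_def w'_def hdist_cosh_coords cosh_ln_div add_divide_distrib)
  moreover have "u / (2 * Im z' * Im w') \<le> u / (2 * Im z * Im w)"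
    using pos Im_le_Im_cusp_stretch[OF h z K] Im_le_Im_cusp_stretch[OF h w K]
    by (auto simp: u_def z'_def w'_def mult_mono intro!: divide_left_mono)
  moreover have "\<bar>t\<bar> \<le> d"
    using ln_Im_div_le_hdist[OF pos(1,2)] ln_Im_div_le_hdist[OF pos(2,1)] pos
    by (simp add: t_def d_def hdist_commute[of w] ln_div)
  then have "cosh (K * \<bar>t\<bar>) - cosh \<bar>t\<bar> \<le> cosh (K * d) - cosh d"
    using K by (intro cosh_mult_diff_mono) auto
  moreover have "cosh (K * \<bar>t\<bar>) = cosh (K * t)"
    using K by (metis abs_mult abs_of_nonneg cosh_real_abs order_trans zero_le_one)
  ultimately have "hdist_cosh z' w' \<le> cosh (K * d)"
    by simp
  moreover have "K * d \<ge> 0"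
    using K pos by (simp add: d_def hdist_nonneg)
  ultimately show ?thesis
    using pos by (simp add: hdist_le_iff z'_def w'_def d_def)
qed

text \<open>For \<open>i = 0, 1, 2\<close> these are the horoballs at \<open>\<infinity>\<close>, \<open>1\<close> and \<open>-1\<close> bounded by the horocycles
  \<open>Im z = 2\<close>, \<open>cmod (z - (1 + \<i>)) = 1\<close> and \<open>cmod (z - (-1 + \<i>)) = 1\<close>; any two of them touch
  in a single point.\<close>

definition cusp_region :: "nat \<Rightarrow> complex set" where
  "cusp_region i = {z. Im z > 0 \<and> 2 \<le> Im ((rot ^^ i) z)}"

text \<open>\<open>cusp_of z\<close> is only meaningful when \<open>z\<close> lies in some cusp region. At a point where two
  regions touch, both candidate formulas below reduce to the identity, so the choice is immaterial.
  Since \<open>rot\<close> has order three, \<open>rot ^^ (3 - i)\<close> inverts \<open>rot ^^ i\<close>.\<close>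

definition cusp_of :: "complex \<Rightarrow> nat" where
  "cusp_of z = (SOME i. i < 3 \<and> z \<in> cusp_region i)"

definition cusp_depth :: "complex \<Rightarrow> real" where
  "cusp_depth z = (if \<exists>i<3. z \<in> cusp_region i then ln (Im ((rot ^^ cusp_of z) z) / 2) else 0)"

definition triangle_stretch :: "real \<Rightarrow> complex \<Rightarrow> complex" where
  "triangle_stretch K z =
     (if \<exists>i<3. z \<in> cusp_region i
      then (rot ^^ (3 - cusp_of z)) (cusp_stretch 2 K ((rot ^^ cusp_of z) z))
      else z)"

lemma cusp_of_mem:
  assumes "i < 3" "z \<in> cusp_region i"
  shows "cusp_of z < 3" "z \<in> cusp_region (cusp_of z)"
  using someI[of "\<lambda>i. i < 3 \<and> z \<in> cusp_region i", OF conjI[OF assms]]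
  by (simp_all add: cusp_of_def)

lemma cusp_regions_touch:
  assumes "i < 3" "j < 3" "i \<noteq> j" "z \<in> cusp_region i" "z \<in> cusp_region j"
  shows "Im ((rot ^^ i) z) = 2"
proof -
  have "Im z > 0"
    using assms by (simp add: cusp_region_def)
  then show ?thesis
    using funpow_rot_adjacent[OF assms(1-3)] assms(4,5) horoballs_tangent
    by (auto simp: cusp_region_def)
qed

lemma triangle_stretch_cusp:
  assumes "i < 3" "z \<in> cusp_region i"
  shows "triangle_stretch K z = (rot ^^ (3 - i)) (cusp_stretch 2 K ((rot ^^ i) z))"
proof -
  have z: "Im z > 0"
    using assms by (simp add: cusp_region_def)
  have fixed: "(rot ^^ (3 - j)) (cusp_stretch 2 K ((rot ^^ j) z)) = z"
    if "j < 3" "Im ((rot ^^ j) z) = 2" for j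
    using that z by (simp add: cusp_stretch_horocycle funpow_rot_inverse)
  show ?thesis
  proof (cases "cusp_of z = i")
    case False
    then show ?thesis
      using assms cusp_of_mem[OF assms] cusp_regions_touch[OF assms(1) _ _ assms(2)]
        cusp_regions_touch[OF _ assms(1) _ _ assms(2)] fixed
      by (auto simp: triangle_stretch_def)
  qed (use assms in \<open>auto simp: triangle_stretch_def\<close>)
qed

lemma triangle_stretch_fixes_horocycle:
  assumes "i < 3" "Im z > 0" "Im ((rot ^^ i) z) = 2"
  shows "triangle_stretch K z = z"
  using assms
  by (simp add: triangle_stretch_cusp cusp_region_def cusp_stretch_horocycle funpow_rot_inverse)

lemma triangle_stretch_outside:
  "\<not> (\<exists>i<3. z \<in> cusp_region i) \<Longrightarrow> triangle_stretch K z = z"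
  by (auto simp: triangle_stretch_def)

lemma cusp_depth_cusp:
  assumes "i < 3" "z \<in> cusp_region i"
  shows "cusp_depth z = ln (Im ((rot ^^ i) z) / 2)"
proof (cases "cusp_of z = i")
  case False
  then show ?thesis
    using assms cusp_of_mem[OF assms] cusp_regions_touch[OF assms(1) _ _ assms(2)]
      cusp_regions_touch[OF _ assms(1) _ _ assms(2)]
    by (auto simp: cusp_depth_def)
qed (use assms in \<open>auto simp: cusp_depth_def\<close>)

lemma cusp_depth_outside: "\<not> (\<exists>i<3. z \<in> cusp_region i) \<Longrightarrow> cusp_depth z = 0"
  by (auto simp: cusp_depth_def)

lemma Im_triangle_stretch_pos:
  assumes "Im z > 0"
  shows "Im (triangle_stretch K z) > 0"
proof (cases "\<exists>i<3. z \<in> cusp_region i")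
  case True
  then obtain i where "i < 3" "z \<in> cusp_region i"
    by blast
  then show ?thesis
    using assms by (auto simp: triangle_stretch_cusp intro!: Im_funpow_rot_pos Im_cusp_stretch_pos)
qed (use assms in \<open>simp add: triangle_stretch_outside\<close>)

lemma rot_in_cusp_region:
  assumes "Im z > 0"
  shows "rot z \<in> cusp_region i \<longleftrightarrow> z \<in> cusp_region (Suc i)"
  using assms by (simp add: cusp_region_def Im_rot_pos funpow_swap1)

lemma cusp_region_3: "cusp_region 3 = cusp_region 0"
  by (auto simp: cusp_region_def funpow_rot_3)

lemma rot_outside_cusp_regions:
  assumes "Im z > 0" "\<not> (\<exists>i<3. z \<in> cusp_region i)"
  shows "\<not> (\<exists>i<3. rot z \<in> cusp_region i)"
proof
  assume "\<exists>i<3. rot z \<in> cusp_region i"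
  then obtain i where "i < 3" "z \<in> cusp_region (Suc i)"
    using assms(1) by (auto simp: rot_in_cusp_region)
  then show False
    using assms(2) cusp_region_3 by (cases "Suc i = 3") auto
qed

lemma triangle_stretch_rot:
  assumes z: "Im z > 0"
  shows "triangle_stretch K (rot z) = rot (triangle_stretch K z)"
proof (cases "\<exists>i<3. z \<in> cusp_region i")
  case True
  then obtain i where i: "i < 3" "z \<in> cusp_region i"
    by blast
  then have "i = 0 \<or> i = 1 \<or> i = 2"
    by auto
  then show ?thesis
  proof (elim disjE)
    assume "i = 0"
    then have "rot z \<in> cusp_region 2"
      using i z cusp_region_3 by (simp add: rot_in_cusp_region numeral_3_eq_3)
    then have "triangle_stretch K (rot z) = rot (cusp_stretch 2 K z)"
      using z by (simp add: triangle_stretch_cusp[of 2] numeral_eq_Suc rot_rot_rot)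
    moreover have "triangle_stretch K z = cusp_stretch 2 K z"
      using i \<open>i = 0\<close> z by (simp add: triangle_stretch_cusp[of 0] funpow_rot_3)
    ultimately show ?thesis
      by simp
  next
    assume "i = 1"
    then have "rot z \<in> cusp_region 0"
      using i z by (simp add: rot_in_cusp_region)
    then have "triangle_stretch K (rot z) = cusp_stretch 2 K (rot z)"
      using z by (simp add: triangle_stretch_cusp[of 0] funpow_rot_3 Im_rot_pos)
    moreover have "triangle_stretch K z = rot (rot (cusp_stretch 2 K (rot z)))"
      using i \<open>i = 1\<close> by (simp add: triangle_stretch_cusp[of 1] numeral_2_eq_2)
    ultimately show ?thesis
      using z by (simp add: rot_rot_rot Im_rot_pos)
  next
    assume "i = 2"
    then have "rot z \<in> cusp_region 1"
      using i z by (simp add: rot_in_cusp_region numeral_2_eq_2)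
    then show ?thesis
      using i \<open>i = 2\<close>
      by (simp add: triangle_stretch_cusp[of 1] triangle_stretch_cusp[of 2] numeral_2_eq_2)
  qed
qed (simp add: triangle_stretch_outside rot_outside_cusp_regions z)

section \<open>The Lipschitz bound\<close>

lemma hdist_triangle_stretch_le:
  assumes z: "Im z > 0" and w: "Im w > 0" and K: "K \<ge> 1"
  shows "hdist (triangle_stretch K z) w \<le> hdist z w + (K - 1) * cusp_depth z"
proof (cases "\<exists>i<3. z \<in> cusp_region i")
  case True
  then obtain i where i: "i < 3" "z \<in> cusp_region i"
    by blast
  define u where "u = cusp_stretch 2 K ((rot ^^ i) z)"
  have u: "Im u > 0"
    unfolding u_def using z by (intro Im_cusp_stretch_pos Im_funpow_rot_pos) auto
  have "hdist (triangle_stretch K z) w = hdist ((rot ^^ i) ((rot ^^ (3 - i)) u)) ((rot ^^ i) w)"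
    using i u w by (simp add: triangle_stretch_cusp u_def hdist_funpow_rot Im_funpow_rot_pos)
  also have "\<dots> = hdist u ((rot ^^ i) w)"
    using i u by (simp add: funpow_rot_inverse)
  also have "\<dots> \<le> hdist ((rot ^^ i) z) ((rot ^^ i) w) + (K - 1) * ln (Im ((rot ^^ i) z) / 2)"
    using i w K unfolding u_def
    by (intro hdist_cusp_stretch_le) (auto simp: cusp_region_def Im_funpow_rot_pos)
  also have "\<dots> = hdist z w + (K - 1) * cusp_depth z"
    using i z w by (simp add: hdist_funpow_rot cusp_depth_cusp)
  finally show ?thesis .
qed (simp add: triangle_stretch_outside cusp_depth_outside)

lemma ln_cusp_height_le_hdist:
  assumes "z \<in> cusp_region i" "Im w > 0" "Im ((rot ^^ i) w) \<le> 2"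
  shows "ln (Im ((rot ^^ i) z) / 2) \<le> hdist z w"
proof -
  have pos: "Im ((rot ^^ i) z) > 0" "Im ((rot ^^ i) w) > 0"
    using assms by (simp_all add: cusp_region_def Im_funpow_rot_pos)
  moreover have "Im ((rot ^^ i) z) / 2 \<le> Im ((rot ^^ i) z) / Im ((rot ^^ i) w)"
    using pos assms(3) by (intro divide_left_mono) auto
  ultimately have "ln (Im ((rot ^^ i) z) / 2) \<le> ln (Im ((rot ^^ i) z) / Im ((rot ^^ i) w))"
    by simp
  also have "\<dots> \<le> hdist ((rot ^^ i) z) ((rot ^^ i) w)"
    using pos by (rule ln_Im_div_le_hdist)
  also have "\<dots> = hdist z w"
    using assms by (simp add: cusp_region_def hdist_funpow_rot)
  finally show ?thesis .
qed

lemma cusp_depths_le_hdist: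
  assumes "i < 3" "j < 3" "i \<noteq> j" "z \<in> cusp_region i" "w \<in> cusp_region j"
  shows "ln (Im ((rot ^^ i) z) / 2) + ln (Im ((rot ^^ j) w) / 2) \<le> hdist z w"
proof -
  have z: "Im z > 0" "2 \<le> Im ((rot ^^ i) z)" and w: "Im w > 0" "2 \<le> Im ((rot ^^ j) w)"
    using assms by (simp_all add: cusp_region_def)
  from funpow_rot_adjacent[OF assms(1-3)] show ?thesis
  proof
    assume "\<forall>x. Im x > 0 \<longrightarrow> (rot ^^ j) x = rot ((rot ^^ i) x)"
    then show ?thesis
      using horoball_depths_le_hdist[of "(rot ^^ i) z" "(rot ^^ i) w"] z w
      by (simp add: hdist_funpow_rot Im_funpow_rot_pos)
  next
    assume "\<forall>x. Im x > 0 \<longrightarrow> (rot ^^ i) x = rot ((rot ^^ j) x)"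
    then show ?thesis
      using horoball_depths_le_hdist[of "(rot ^^ j) w" "(rot ^^ j) z"] z w
      by (simp add: hdist_funpow_rot Im_funpow_rot_pos hdist_commute[of w])
  qed
qed

lemma cusp_depth_add_le_hdist:
  assumes z: "Im z > 0" and w: "Im w > 0"
    and apart: "\<not> (\<exists>i<3. z \<in> cusp_region i \<and> w \<in> cusp_region i)"
  shows "cusp_depth z + cusp_depth w \<le> hdist z w"
proof (cases "\<exists>i<3. z \<in> cusp_region i")
  case True
  then obtain i where i: "i < 3" "z \<in> cusp_region i"
    by blast
  show ?thesis
  proof (cases "\<exists>j<3. w \<in> cusp_region j")
    case True
    then obtain j where "j < 3" "w \<in> cusp_region j"
      by blast
    then show ?thesis
      using i apart cusp_depths_le_hdist[OF i(1) \<open>j < 3\<close> _ i(2)] by (auto simp: cusp_depth_cusp)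
  next
    case False
    then show ?thesis
      using i w ln_cusp_height_le_hdist[OF i(2) w]
      by (auto simp: cusp_depth_cusp cusp_depth_outside cusp_region_def)
  qed
next
  case False
  show ?thesis
  proof (cases "\<exists>j<3. w \<in> cusp_region j")
    case True
    then obtain j where j: "j < 3" "w \<in> cusp_region j"
      by blast
    then show ?thesis
      using False z ln_cusp_height_le_hdist[OF j(2) z]
      by (auto simp: cusp_depth_cusp cusp_depth_outside cusp_region_def hdist_commute[of z])
  qed (use False z w in \<open>simp add: cusp_depth_outside hdist_nonneg\<close>)
qed

lemma triangle_stretch_lipschitz:
  assumes z: "Im z > 0" and w: "Im w > 0" and K: "K \<ge> 1"
  shows "hdist (triangle_stretch K z) (triangle_stretch K w) \<le> K * hdist z w"
proof (cases "\<exists>i<3. z \<in> cusp_region i \<and> w \<in> cusp_region i")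
  case True
  then obtain i where i: "i < 3" "z \<in> cusp_region i" "w \<in> cusp_region i"
    by blast
  define z' w' where "z' = cusp_stretch 2 K ((rot ^^ i) z)" and "w' = cusp_stretch 2 K ((rot ^^ i) w)"
  have "Im z' > 0" "Im w' > 0"
    unfolding z'_def w'_def using z w by (intro Im_cusp_stretch_pos Im_funpow_rot_pos; simp)+
  then have "hdist (triangle_stretch K z) (triangle_stretch K w) = hdist z' w'"
    using i by (simp add: triangle_stretch_cusp z'_def w'_def hdist_funpow_rot)
  also have "\<dots> \<le> K * hdist ((rot ^^ i) z) ((rot ^^ i) w)"
    using i K unfolding z'_def w'_def
    by (intro hdist_cusp_stretch_lipschitz) (auto simp: cusp_region_def)
  also have "\<dots> = K * hdist z w"
    using z w by (simp add: hdist_funpow_rot)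
  finally show ?thesis .
next
  case False
  have "hdist (triangle_stretch K z) (triangle_stretch K w)
          \<le> hdist z (triangle_stretch K w) + (K - 1) * cusp_depth z"
    using z w K by (intro hdist_triangle_stretch_le Im_triangle_stretch_pos)
  moreover have "hdist z (triangle_stretch K w) \<le> hdist z w + (K - 1) * cusp_depth w"
    using hdist_triangle_stretch_le[OF w z K] by (simp add: hdist_commute)
  moreover have "(K - 1) * cusp_depth z + (K - 1) * cusp_depth w \<le> K * hdist z w - hdist z w"
    using mult_left_mono[OF cusp_depth_add_le_hdist[OF z w False], of "K - 1"] K
    by (simp add: algebra_simps)
  ultimately show ?thesis
    by linarith
qed

section \<open>The stretch map is a homeomorphism of the triangle\<close>

lemma triangle_stretch_inverse:
  assumes K: "K > 0" and z: "Im z > 0"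
  shows "triangle_stretch K (triangle_stretch (1 / K) z) = z"
proof (cases "\<exists>i<3. z \<in> cusp_region i")
  case True
  then obtain i where i: "i < 3" "z \<in> cusp_region i"
    by blast
  define q where "q = cusp_stretch 2 (1 / K) ((rot ^^ i) z)"
  have q: "Im q > 0" "2 \<le> Im q"
    using i K height_le_Im_cusp_stretch[of 2 "(rot ^^ i) z" "1 / K"]
    by (auto simp: q_def cusp_region_def)
  have "(rot ^^ i) ((rot ^^ (3 - i)) q) = q"
    using i q by (simp add: funpow_rot_inverse)
  then have "(rot ^^ (3 - i)) q \<in> cusp_region i"
    using q by (simp add: cusp_region_def Im_funpow_rot_pos)
  then have "triangle_stretch K ((rot ^^ (3 - i)) q) = (rot ^^ (3 - i)) ((rot ^^ i) z)"
    using i K \<open>(rot ^^ i) ((rot ^^ (3 - i)) q) = q\<close>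
    by (simp add: triangle_stretch_cusp q_def cusp_stretch_inverse Im_funpow_rot_pos z)
  then show ?thesis
    using i z by (simp add: triangle_stretch_cusp q_def funpow_rot_inverse)
qed (simp add: triangle_stretch_outside)

lemma triangle_stretch_ideal_triangle:
  assumes "K > 0" "z \<in> ideal_triangle"
  shows "triangle_stretch K z \<in> ideal_triangle"
proof (cases "\<exists>i<3. z \<in> cusp_region i")
  case True
  then obtain i where "i < 3" "z \<in> cusp_region i"
    by blast
  then show ?thesis
    using assms
    by (simp add: triangle_stretch_cusp funpow_rot_ideal_triangle cusp_stretch_ideal_triangle
        cusp_region_def)
qed (use assms in \<open>simp add: triangle_stretch_outside\<close>)

lemma image_triangle_stretch:
  assumes "K > 0"
  shows "triangle_stretch K ` ideal_triangle = ideal_triangle"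
proof
  show "triangle_stretch K ` ideal_triangle \<subseteq> ideal_triangle"
    using assms triangle_stretch_ideal_triangle by blast
  show "ideal_triangle \<subseteq> triangle_stretch K ` ideal_triangle"
  proof
    fix z
    assume z: "z \<in> ideal_triangle"
    then have "triangle_stretch K (triangle_stretch (1 / K) z) = z"
      using assms by (simp add: triangle_stretch_inverse ideal_triangle_def)
    moreover have "triangle_stretch (1 / K) z \<in> ideal_triangle"
      using assms z by (simp add: triangle_stretch_ideal_triangle)
    ultimately show "z \<in> triangle_stretch K ` ideal_triangle"
      by (metis image_eqI)
  qed
qed

definition thick_part :: "complex set" where
  "thick_part = {z. Im z > 0 \<and> (\<forall>i<3. Im ((rot ^^ i) z) \<le> 2)}"

lemma closedin_height_preimage:
  "closed S \<Longrightarrow> closedin (top_of_set upper_half_plane) (upper_half_plane \<inter> (\<lambda>z. Im ((rot ^^ i) z)) -` S)"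
  by (intro continuous_closedin_preimage continuous_intros continuous_on_funpow_rot)

lemma closedin_cusp_region: "closedin (top_of_set upper_half_plane) (cusp_region i)"
proof -
  have "cusp_region i = upper_half_plane \<inter> (\<lambda>z. Im ((rot ^^ i) z)) -` {2..}"
    by (auto simp: cusp_region_def upper_half_plane_def)
  then show ?thesis
    by (simp add: closedin_height_preimage)
qed

lemma closedin_thick_part: "closedin (top_of_set upper_half_plane) thick_part"
proof -
  have eq: "thick_part = (\<Inter>i<3. upper_half_plane \<inter> (\<lambda>z. Im ((rot ^^ i) z)) -` {..2})"
    by (auto simp: thick_part_def upper_half_plane_def lessThan_empty_iff)
  show ?thesis
    unfolding eq by (rule closedin_INT) (simp_all add: closedin_height_preimage lessThan_empty_iff)
qed

lemma triangle_stretch_thick_part: "z \<in> thick_part \<Longrightarrow> triangle_stretch K z = z"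
  by (cases "\<exists>i<3. z \<in> cusp_region i")
    (auto simp: thick_part_def cusp_region_def triangle_stretch_outside
      intro!: triangle_stretch_fixes_horocycle)

lemma continuous_on_cusp_region:
  assumes "i < 3"
  shows "continuous_on (cusp_region i) (triangle_stretch K)"
proof -
  have "continuous_on upper_half_plane (\<lambda>z. (rot ^^ (3 - i)) (cusp_stretch 2 K ((rot ^^ i) z)))"
    by (intro continuous_on_compose2[OF continuous_on_funpow_rot]
        continuous_on_compose2[OF continuous_on_cusp_stretch] continuous_on_funpow_rot)
      (auto simp: upper_half_plane_def dest: Im_funpow_rot_pos[where n = i])
  then have "continuous_on (cusp_region i) (\<lambda>z. (rot ^^ (3 - i)) (cusp_stretch 2 K ((rot ^^ i) z)))"
    by (rule continuous_on_subset) (auto simp: cusp_region_def upper_half_plane_def)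
  then show ?thesis
    by (rule continuous_on_eq) (simp add: triangle_stretch_cusp[OF assms])
qed

lemma continuous_on_triangle_stretch: "continuous_on upper_half_plane (triangle_stretch K)"
proof -
  define pieces where "pieces = insert thick_part (cusp_region ` {..<3})"
  have cont: "continuous_map (subtopology (top_of_set upper_half_plane) P) euclidean (triangle_stretch K)"
    if "P \<in> pieces" for P
  proof -
    have "P \<subseteq> upper_half_plane"
      using that by (auto simp: pieces_def thick_part_def cusp_region_def upper_half_plane_def)
    then have "subtopology (top_of_set upper_half_plane) P = top_of_set P"
      by (metis subtopology_subtopology Int_absorb1)
    moreover have "continuous_on P (triangle_stretch K)"
      using that continuous_on_eq[OF continuous_on_id, of thick_part "triangle_stretch K"]
      by (auto simp: pieces_def continuous_on_cusp_region triangle_stretch_thick_part)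
    ultimately show ?thesis
      by simp
  qed
  have cover: "\<exists>P\<in>pieces. z \<in> P" if "z \<in> upper_half_plane" for z
  proof (cases "\<exists>i<3. z \<in> cusp_region i")
    case False
    then have "z \<in> thick_part"
      using that by (auto simp: thick_part_def cusp_region_def upper_half_plane_def)
    then show ?thesis
      by (simp add: pieces_def)
  qed (auto simp: pieces_def)
  have closed: "closedin (top_of_set upper_half_plane) P" if "P \<in> pieces" for P
    using that by (auto simp: pieces_def closedin_thick_part closedin_cusp_region)
  have "continuous_map (top_of_set upper_half_plane) euclidean (triangle_stretch K)"
  proof (rule pasting_lemma_closed[where I = pieces and T = "\<lambda>P. P" and f = "\<lambda>_. triangle_stretch K",
        OF _ closed cont])
    show "finite pieces"
      by (simp add: pieces_def)
  qed (use cover in auto)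
  then show ?thesis
    by simp
qed

lemma homeomorphism_triangle_stretch:
  assumes "K > 0"
  shows "homeomorphism ideal_triangle ideal_triangle (triangle_stretch K) (triangle_stretch (1 / K))"
proof -
  have T: "ideal_triangle \<subseteq> upper_half_plane"
    by (auto simp: ideal_triangle_def upper_half_plane_def)
  then have "\<forall>z\<in>ideal_triangle. triangle_stretch K (triangle_stretch (1 / K) z) = z"
    "\<forall>z\<in>ideal_triangle. triangle_stretch (1 / K) (triangle_stretch K z) = z"
    using assms triangle_stretch_inverse[of K] triangle_stretch_inverse[of "1 / K"]
    by (auto simp: upper_half_plane_def)
  then show ?thesis
    using assms T by (simp add: homeomorphism_def image_triangle_stretch
        continuous_on_subset[OF continuous_on_triangle_stretch])
qed

section \<open>The sides\<close>

lemma triangle_stretch_side_right: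
  assumes "z \<in> side_right"
  shows "triangle_stretch K z = cusp_stretch 2 K z"
proof -
  define t where "t = Im z"
  have t: "t > 0" "z = Complex 1 t"
    using assms complex_surj[of z] by (auto simp: side_right_def t_def)
  show ?thesis
  proof (cases "2 \<le> t")
    case True
    then have "z \<in> cusp_region 0"
      using t by (simp add: cusp_region_def)
    then show ?thesis
      using t by (simp add: triangle_stretch_cusp[of 0] funpow_rot_3)
  next
    case False
    have rot_z: "rot z = Complex (- 1) (4 / t)"
      using t by (simp add: rot_Complex_1)
    then have "z \<in> cusp_region 1"
      using t False by (simp add: cusp_region_def le_divide_eq)
    then have "triangle_stretch K z = rot (rot (cusp_stretch 2 K (rot z)))"
      by (simp add: triangle_stretch_cusp[of 1] numeral_2_eq_2)
    also have "cusp_stretch 2 K (rot z) = rot (cusp_stretch 2 K z)"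
    proof -
      have "(2 / t) powr K = inverse ((t / 2) powr K)"
        using t by (simp add: powr_divide inverse_eq_divide)
      then show ?thesis
        using t by (simp add: rot_z rot_Complex_1 cusp_stretch_def field_simps)
    qed
    finally show ?thesis
      using t by (simp add: rot_rot_rot)
  qed
qed

definition scales_side :: "real \<Rightarrow> (complex \<Rightarrow> complex) \<Rightarrow> complex set \<Rightarrow> bool" where
  "scales_side K f S \<longleftrightarrow> f ` S = S \<and> (\<forall>z\<in>S. \<forall>w\<in>S. hdist (f z) (f w) = K * hdist z w)"

lemma scales_side_right:
  assumes "K > 0"
  shows "scales_side K (triangle_stretch K) side_right"
proof -
  have "cusp_stretch 2 K ` side_right \<subseteq> side_right"
    by (auto simp: side_right_def)
  moreover have "side_right \<subseteq> cusp_stretch 2 K ` side_right"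
  proof
    fix z
    assume z: "z \<in> side_right"
    then have "Im (cusp_stretch 2 (1 / K) z) > 0"
      by (intro Im_cusp_stretch_pos) (auto simp: side_right_def)
    then have "z = cusp_stretch 2 K (cusp_stretch 2 (1 / K) z)" "cusp_stretch 2 (1 / K) z \<in> side_right"
      using assms z by (simp_all add: cusp_stretch_inverse side_right_def)
    then show "z \<in> cusp_stretch 2 K ` side_right"
      by (metis image_eqI)
  qed
  ultimately show ?thesis
    using assms
    by (auto simp: scales_side_def triangle_stretch_side_right side_right_def image_def
        intro!: hdist_cusp_stretch_vertical)
qed

lemma scales_side_rot:
  assumes S: "S \<subseteq> {z. Im z > 0}" and scales: "scales_side K (triangle_stretch K) S"
  shows "scales_side K (triangle_stretch K) (rot ` S)"
proof -
  have eqv: "triangle_stretch K (rot z) = rot (triangle_stretch K z)" if "z \<in> S" for z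
    using that S by (auto intro: triangle_stretch_rot)
  have "triangle_stretch K ` rot ` S = rot ` triangle_stretch K ` S"
    by (force simp: eqv image_image)
  moreover have "hdist (triangle_stretch K (rot z)) (triangle_stretch K (rot w)) = K * hdist (rot z) (rot w)"
    if "z \<in> S" "w \<in> S" for z w
  proof -
    have "Im z > 0" "Im w > 0"
      using that S by auto
    then show ?thesis
      using that scales by (simp add: eqv hdist_rot Im_triangle_stretch_pos scales_side_def)
  qed
  ultimately show ?thesis
    using scales by (simp add: scales_side_def)
qed

lemma scales_triangle_sides:
  assumes "K > 0" "S \<in> triangle_sides"
  shows "scales_side K (triangle_stretch K) S"
proof -
  have "side_right \<subseteq> {z. Im z > 0}" "side_left \<subseteq> {z. Im z > 0}"
    by (auto simp: side_right_def side_left_def)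
  then have left: "scales_side K (triangle_stretch K) side_left"
    using scales_side_rot[OF _ scales_side_right[OF assms(1)]] by (simp add: image_rot_sides)
  then have "scales_side K (triangle_stretch K) side_bottom"
    using scales_side_rot[OF \<open>side_left \<subseteq> _\<close> left] by (simp add: image_rot_sides)
  then show ?thesis
    using assms left scales_side_right by (auto simp: triangle_sides_def)
qed

theorem mainTheorem3:
  fixes K :: real
  assumes "K > 1"
  shows "\<exists>f g. homeomorphism ideal_triangle ideal_triangle f g
          \<and> (\<forall>z\<in>ideal_triangle. \<forall>w\<in>ideal_triangle.
               hdist (f z) (f w) \<le> K * hdist z w)
          \<and> (\<forall>S\<in>triangle_sides. f ` S = S
               \<and> (\<forall>z\<in>S. \<forall>w\<in>S. hdist (f z) (f w) = K * hdist z w))"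
proof -
  have "K > 0"
    using assms by simp
  then have "homeomorphism ideal_triangle ideal_triangle (triangle_stretch K) (triangle_stretch (1 / K))"
    by (rule homeomorphism_triangle_stretch)
  moreover have "\<forall>z\<in>ideal_triangle. \<forall>w\<in>ideal_triangle.
                   hdist (triangle_stretch K z) (triangle_stretch K w) \<le> K * hdist z w"
    using assms by (auto simp: ideal_triangle_def intro!: triangle_stretch_lipschitz)
  moreover have "\<forall>S\<in>triangle_sides. scales_side K (triangle_stretch K) S"
    using \<open>K > 0\<close> scales_triangle_sides by blast
  ultimately show ?thesis
    unfolding scales_side_def by blast
qed

end
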